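(* Let $\Sigma\in\mathcal{G}_n$ and $Q\in\mathcal{Q}(\Sigma)$ with level $\ell$, and let $p$ be a prime divisor of $\ell$. Then there exists an integral vector $z\not\equiv 0\pmod p$ such that $W(\Sigma)^{\rm T}z\equiv 0\pmod p$.
   Context: An oriented graph on vertices $v_1,\dots,v_n$ is a simple graph with each edge directed; its skew-adjacency matrix $S(\Sigma)=(s_{ij})$ has $s_{ij}=1$ if $(v_i,v_j)$ is an arc, $-1$ if $(v_j,v_i)$ is an arc, $0$ otherwise. Two oriented graphs are generalized cospectral if their skew-adjacency matrices $S$ have the same spectrum and the matrices $J-I-S$ have the same spectrum. With $e$ the all-one vector, $W(\Sigma)=[e,Se,\dots,S^{n-1}e]$, $S=S(\Sigma)$. $\mathcal{G}_n$ is the set of $n$-vertex oriented graphs with $2^{-\lfloor n/2\rfloor}\det W(\Sigma)$ an odd square-free integer. A rational orthogonal matrix $Q$ is regular if $Qe=e$; its level is the least positive integer $k$ with $kQ$ integral. $\mathcal{Q}(\Sigma)$ is the set of regular rational orthogonal $Q$ with $Q^{\rm T}S(\Sigma)Q=S(\Delta)$ for some oriented graph $\Delta$ generalized cospectral with $\Sigma$. *)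

theory Defs
  imports "Jordan_Normal_Form.Char_Poly" "HOL-Computational_Algebra.Squarefree"
begin

text \<open>An oriented graph on vertices 0..<n, given by its arc relation:
  A i j means (v_i, v_j) is an arc. Simple: no loops, at most one direction per pair.\<close>
definition oriented_graph :: "nat \<Rightarrow> (nat \<Rightarrow> nat \<Rightarrow> bool) \<Rightarrow> bool" where
  "oriented_graph n A \<longleftrightarrow> (\<forall>i j. A i j \<longrightarrow> i < n \<and> j < n \<and> i \<noteq> j \<and> \<not> A j i)"

definition skew_adj :: "nat \<Rightarrow> (nat \<Rightarrow> nat \<Rightarrow> bool) \<Rightarrow> int mat" where
  "skew_adj n A = mat n n (\<lambda>(i,j). if A i j then 1 else if A j i then -1 else 0)"

definition ones_vec :: "nat \<Rightarrow> 'a :: one vec" where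
  "ones_vec n = vec n (\<lambda>_. 1)"

definition all_ones_mat :: "nat \<Rightarrow> 'a :: one mat" where
  "all_ones_mat n = mat n n (\<lambda>_. 1)"

text \<open>Same spectrum = same characteristic polynomial.\<close>
definition gen_cospectral :: "nat \<Rightarrow> (nat \<Rightarrow> nat \<Rightarrow> bool) \<Rightarrow> (nat \<Rightarrow> nat \<Rightarrow> bool) \<Rightarrow> bool" where
  "gen_cospectral n A B \<longleftrightarrow>
     char_poly (skew_adj n A) = char_poly (skew_adj n B) \<and>
     char_poly (all_ones_mat n - 1\<^sub>m n - skew_adj n A) =
     char_poly (all_ones_mat n - 1\<^sub>m n - skew_adj n B)"

definition walk_mat :: "nat \<Rightarrow> (nat \<Rightarrow> nat \<Rightarrow> bool) \<Rightarrow> int mat" where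
  "walk_mat n A = mat n n (\<lambda>(i,j). ((skew_adj n A ^\<^sub>m j) *\<^sub>v ones_vec n) $ i)"

definition in_G :: "nat \<Rightarrow> (nat \<Rightarrow> nat \<Rightarrow> bool) \<Rightarrow> bool" where
  "in_G n A \<longleftrightarrow> oriented_graph n A \<and>
     (\<exists>m::int. det (walk_mat n A) = 2 ^ (n div 2) * m \<and> odd m \<and> squarefree m)"

definition regular_rat_orth :: "nat \<Rightarrow> rat mat \<Rightarrow> bool" where
  "regular_rat_orth n Q \<longleftrightarrow> Q \<in> carrier_mat n n \<and> Q\<^sup>T * Q = 1\<^sub>m n \<and>
     Q *\<^sub>v ones_vec n = ones_vec n"

definition level :: "nat \<Rightarrow> rat mat \<Rightarrow> nat" where
  "level n Q = (LEAST k::nat. k > 0 \<and> (\<forall>i<n. \<forall>j<n. of_nat k * Q $$ (i,j) \<in> \<int>))"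

definition Qset :: "nat \<Rightarrow> (nat \<Rightarrow> nat \<Rightarrow> bool) \<Rightarrow> rat mat set" where
  "Qset n A = {Q. regular_rat_orth n Q \<and>
     (\<exists>B. oriented_graph n B \<and> gen_cospectral n A B \<and>
          Q\<^sup>T * map_mat of_int (skew_adj n A) * Q = map_mat of_int (skew_adj n B))}"

end

theory Submission
  imports Defs
begin

(* Let Delta be the graph with Q^T S(Sigma) Q = S(Delta). Orthogonality makes Q^T intertwine
   the two skew-adjacency matrices and gives Q^T e = e, hence Q^T S(Sigma)^k e = S(Delta)^k e,
   i.e. W(Sigma)^T Q = W(Delta)^T. Multiplying by the level l gives
   W(Sigma)^T (l Q) = l W(Delta)^T = 0 (mod p). By minimality of l the matrix (l/p) Q is not
   integral, so some column of the integral matrix l Q is nonzero mod p; that column is z. *)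

lemma common_denominator:
  fixes X :: "rat set"
  assumes "finite X"
  shows "\<exists>k::nat. 0 < k \<and> (\<forall>q\<in>X. of_nat k * q \<in> \<int>)"
  using assms
proof (induction X rule: finite_induct)
  case empty
  show ?case by (intro exI[of _ 1]) simp
next
  case (insert q X)
  then obtain k where k: "0 < k" "\<forall>x\<in>X. of_nat k * x \<in> \<int>" by blast
  obtain a b where ab: "quotient_of q = (a, b)" by fastforce
  have "0 < b" using quotient_of_denom_pos[OF ab] .
  have "of_int b * q = of_int a" using quotient_of_div[OF ab] \<open>0 < b\<close> by simp
  then have "of_nat (k * nat b) * q \<in> \<int>" using \<open>0 < b\<close> by (simp add: mult.assoc)
  moreover have "of_nat (k * nat b) * x \<in> \<int>" if "x \<in> X" for x
    using k(2) that \<open>0 < b\<close> by (metis Ints_mult Ints_of_nat mult.commute mult.left_commute of_nat_mult)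
  ultimately show ?case using k(1) \<open>0 < b\<close> by (intro exI[of _ "k * nat b"]) auto
qed

lemma level_spec:
  "0 < level n Q \<and> (\<forall>i<n. \<forall>j<n. of_nat (level n Q) * Q $$ (i,j) \<in> \<int>)"
proof -
  have "finite ((\<lambda>(i,j). Q $$ (i,j)) ` ({..<n} \<times> {..<n}))" by simp
  from common_denominator[OF this]
  have "\<exists>k. 0 < k \<and> (\<forall>i<n. \<forall>j<n. of_nat k * Q $$ (i,j) \<in> \<int>)" by auto
  then show ?thesis unfolding level_def by (rule LeastI_ex)
qed

lemma not_integral_below_level:
  assumes "0 < k" "k < level n Q"
  shows "\<exists>i<n. \<exists>j<n. of_nat k * Q $$ (i,j) \<notin> \<int>"
  using not_less_Least[OF assms(2)[unfolded level_def]] assms(1) by blast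

lemma level_column_not_dvd:
  assumes "prime p" "p dvd level n Q"
  obtains j z where "j < n" "z \<in> carrier_vec n"
    "\<forall>i<n. of_int (z $ i) = of_nat (level n Q) * Q $$ (i,j)"
    "\<not> (\<forall>i<n. int p dvd z $ i)"
proof -
  define l where "l = level n Q"
  obtain m where lm: "l = p * m" using assms(2) unfolding l_def by blast
  have "1 < p" using assms(1) prime_gt_1_nat by blast
  have "0 < l" using level_spec unfolding l_def by blast
  then have "0 < m" "m < l" using lm \<open>1 < p\<close> by auto
  then obtain i0 j where ij: "i0 < n" "j < n" "of_nat m * Q $$ (i0,j) \<notin> \<int>"
    using not_integral_below_level unfolding l_def by blast
  define z :: "int vec" where "z = vec n (\<lambda>i. \<lfloor>of_nat l * Q $$ (i,j)\<rfloor>)"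
  have z: "of_int (z $ i) = of_nat l * Q $$ (i,j)" if "i < n" for i
    using level_spec that ij(2) unfolding z_def l_def by (auto elim!: Ints_cases)
  have "\<not> int p dvd z $ i0"
  proof
    assume "int p dvd z $ i0"
    then obtain c where "z $ i0 = int p * c" by blast
    moreover have "of_int (z $ i0) = of_nat p * (of_nat m * Q $$ (i0,j))"
      using z[OF ij(1)] lm by simp
    ultimately have "of_nat m * Q $$ (i0,j) = rat_of_int c" using \<open>1 < p\<close> by simp
    then show False using ij(3) by (metis Ints_of_int)
  qed
  then show thesis using that[of j z] ij(1,2) z unfolding l_def z_def by auto
qed

lemma conj_pow_mult_fixed_vec:
  fixes P Q S T :: "'a :: field mat"
  assumes P: "P \<in> carrier_mat n n" and Q: "Q \<in> carrier_mat n n" and S: "S \<in> carrier_mat n n"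
    and e: "e \<in> carrier_vec n"
    and PQ: "P * Q = 1\<^sub>m n" and PSQ: "P * S * Q = T" and Qe: "Q *\<^sub>v e = e"
  shows "P *\<^sub>v (S ^\<^sub>m k *\<^sub>v e) = T ^\<^sub>m k *\<^sub>v e"
proof -
  have QP: "Q * P = 1\<^sub>m n" by (rule mat_mult_left_right_inverse[OF P Q PQ])
  have T: "T \<in> carrier_mat n n" using P S Q PSQ by auto
  have Tk: "T ^\<^sub>m k \<in> carrier_mat n n" using T by simp
  have "Q * T * P = (Q * P) * S * (Q * P)"
    unfolding PSQ[symmetric] using P S Q by (simp add: assoc_mult_mat[of _ n n _ n _ n])
  then have "similar_mat_wit S T Q P"
    using similar_mat_witI[OF QP PQ _ S T Q P] S QP by simp
  then have "S ^\<^sub>m k = Q * T ^\<^sub>m k * P" by (rule similar_mat_wit_pow_id)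
  then have "P * S ^\<^sub>m k = (P * Q) * T ^\<^sub>m k * P"
    using P Q Tk by (simp add: assoc_mult_mat[of _ n n _ n _ n])
  then have PSk: "P * S ^\<^sub>m k = T ^\<^sub>m k * P" using PQ Tk by (simp add: left_mult_one_mat)
  have Pe: "P *\<^sub>v e = e" by (metis P Q e PQ Qe assoc_mult_mat_vec one_mult_mat_vec)
  have "P *\<^sub>v (S ^\<^sub>m k *\<^sub>v e) = (P * S ^\<^sub>m k) *\<^sub>v e"
    using assoc_mult_mat_vec[OF P pow_carrier_mat[OF S] e] by simp
  also have "\<dots> = T ^\<^sub>m k *\<^sub>v (P *\<^sub>v e)"
    unfolding PSk using assoc_mult_mat_vec[OF Tk P e] .
  finally show ?thesis unfolding Pe .
qed

lemma col_of_int_walk_mat: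
  assumes "k < n"
  shows "col (map_mat rat_of_int (walk_mat n A)) k
    = map_mat of_int (skew_adj n A) ^\<^sub>m k *\<^sub>v ones_vec n"
proof -
  have S: "skew_adj n A \<in> carrier_mat n n" unfolding skew_adj_def by simp
  have e: "(ones_vec n :: int vec) \<in> carrier_vec n" unfolding ones_vec_def by simp
  have ones: "map_vec rat_of_int (ones_vec n) = ones_vec n"
    by (intro eq_vecI) (auto simp: ones_vec_def)
  have "map_vec rat_of_int (skew_adj n A ^\<^sub>m k *\<^sub>v ones_vec n)
      = map_mat of_int (skew_adj n A ^\<^sub>m k) *\<^sub>v map_vec of_int (ones_vec n)"
    by (rule of_int_hom.mult_mat_vec_hom[OF pow_carrier_mat[OF S] e])
  also have "\<dots> = map_mat of_int (skew_adj n A) ^\<^sub>m k *\<^sub>v ones_vec n"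
    unfolding of_int_hom.mat_hom_pow[OF S] ones ..
  finally have hom: "map_vec rat_of_int (skew_adj n A ^\<^sub>m k *\<^sub>v ones_vec n)
      = map_mat of_int (skew_adj n A) ^\<^sub>m k *\<^sub>v ones_vec n" .
  show ?thesis
    unfolding hom[symmetric] using assms S by (intro eq_vecI) (auto simp: walk_mat_def)
qed

lemma walk_mat_transpose_mult_eq:
  assumes "regular_rat_orth n Q"
    and "Q\<^sup>T * map_mat of_int (skew_adj n A) * Q = map_mat of_int (skew_adj n B)"
  shows "(map_mat of_int (walk_mat n A))\<^sup>T * Q = (map_mat of_int (walk_mat n B))\<^sup>T"
proof -
  have Q: "Q \<in> carrier_mat n n" and QtQ: "Q\<^sup>T * Q = 1\<^sub>m n" and Qe: "Q *\<^sub>v ones_vec n = ones_vec n"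
    using assms(1) unfolding regular_rat_orth_def by auto
  have S: "map_mat rat_of_int (skew_adj n A) \<in> carrier_mat n n" unfolding skew_adj_def by simp
  have e: "(ones_vec n :: rat vec) \<in> carrier_vec n" unfolding ones_vec_def by simp
  have W: "walk_mat n C \<in> carrier_mat n n" "map_mat rat_of_int (walk_mat n C) \<in> carrier_mat n n"
    for C unfolding walk_mat_def by simp_all
  have "Q\<^sup>T * map_mat of_int (walk_mat n A) = map_mat rat_of_int (walk_mat n B)"
  proof (rule mat_col_eqI)
    fix k assume "k < dim_col (map_mat rat_of_int (walk_mat n B))"
    then have "k < n" using W(1)[of B] by simp
    have "col (Q\<^sup>T * map_mat of_int (walk_mat n A)) k = Q\<^sup>T *\<^sub>v col (map_mat of_int (walk_mat n A)) k"
      using Q W(2)[of A] \<open>k < n\<close> by (intro col_mult2) auto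
    also have "\<dots> = map_mat of_int (skew_adj n B) ^\<^sub>m k *\<^sub>v ones_vec n"
      unfolding col_of_int_walk_mat[OF \<open>k < n\<close>]
      by (rule conj_pow_mult_fixed_vec[OF _ Q S e QtQ assms(2) Qe]) (use Q in simp)
    finally show "col (Q\<^sup>T * map_mat of_int (walk_mat n A)) k = col (map_mat of_int (walk_mat n B)) k"
      unfolding col_of_int_walk_mat[OF \<open>k < n\<close>] .
  qed (use Q in \<open>simp_all add: walk_mat_def\<close>)
  then show ?thesis
    using transpose_mult[of "Q\<^sup>T" n n "map_mat of_int (walk_mat n A)" n] Q W(2)[of A] by simp
qed

lemma transpose_mult_scaled_col:
  fixes W V :: "int mat" and Q :: "rat mat"
  assumes W: "W \<in> carrier_mat n n" and V: "V \<in> carrier_mat n n" and Q: "Q \<in> carrier_mat n n"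
    and WQ: "(map_mat of_int W)\<^sup>T * Q = (map_mat of_int V)\<^sup>T"
    and z: "z \<in> carrier_vec n" "\<forall>i<n. of_int (z $ i) = of_nat l * Q $$ (i,j)"
    and "j < n" "k < n"
  shows "(W\<^sup>T *\<^sub>v z) $ k = int l * V $$ (j,k)"
proof -
  have Wt: "(map_mat rat_of_int W)\<^sup>T \<in> carrier_mat n n" using W by simp
  have "map_vec of_int z = of_nat l \<cdot>\<^sub>v col Q j" using z Q \<open>j < n\<close> by auto
  have "map_vec rat_of_int (W\<^sup>T *\<^sub>v z) = (map_mat of_int W)\<^sup>T *\<^sub>v map_vec of_int z"
    using of_int_hom.mult_mat_vec_hom[of "W\<^sup>T" n n z] W z(1) by (simp add: map_mat_transpose)
  also have "\<dots> = (map_mat of_int W)\<^sup>T *\<^sub>v (of_nat l \<cdot>\<^sub>v col Q j)"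
    unfolding \<open>map_vec of_int z = _\<close> ..
  also have "\<dots> = of_nat l \<cdot>\<^sub>v ((map_mat of_int W)\<^sup>T *\<^sub>v col Q j)"
    by (rule mult_mat_vec[OF Wt col_carrier_vec[OF \<open>j < n\<close> Q]])
  also have "\<dots> = of_nat l \<cdot>\<^sub>v col ((map_mat of_int W)\<^sup>T * Q) j"
    unfolding col_mult2[OF Wt Q \<open>j < n\<close>] ..
  finally have "map_vec rat_of_int (W\<^sup>T *\<^sub>v z) = of_nat l \<cdot>\<^sub>v col ((map_mat of_int V)\<^sup>T) j"
    unfolding WQ .
  from arg_cong[OF this, of "\<lambda>v. v $ k"]
  have "of_int ((W\<^sup>T *\<^sub>v z) $ k) = rat_of_int (int l * V $$ (j,k))"
    using W V \<open>j < n\<close> \<open>k < n\<close> by simp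
  then show ?thesis by (simp only: of_int_eq_iff)
qed

theorem lemma3p2:
  fixes n p :: nat and A :: "nat \<Rightarrow> nat \<Rightarrow> bool" and Q :: "rat mat"
  assumes "in_G n A"
    and "Q \<in> Qset n A"
    and "prime p" and "p dvd level n Q"
  shows "\<exists>z :: int vec. z \<in> carrier_vec n \<and> \<not> (\<forall>i<n. int p dvd z $ i) \<and>
           (\<forall>i<n. int p dvd ((walk_mat n A)\<^sup>T *\<^sub>v z) $ i)"
proof -
  from assms(2) obtain B where Q: "regular_rat_orth n Q"
    and "Q\<^sup>T * map_mat of_int (skew_adj n A) * Q = map_mat of_int (skew_adj n B)"
    unfolding Qset_def by auto
  then have WQ: "(map_mat of_int (walk_mat n A))\<^sup>T * Q = (map_mat of_int (walk_mat n B))\<^sup>T"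
    by (rule walk_mat_transpose_mult_eq)
  obtain j z where j: "j < n" and z: "z \<in> carrier_vec n"
    "\<forall>i<n. of_int (z $ i) = of_nat (level n Q) * Q $$ (i,j)"
    and z_not_dvd: "\<not> (\<forall>i<n. int p dvd z $ i)"
    using level_column_not_dvd[OF assms(3,4)] by blast
  have "((walk_mat n A)\<^sup>T *\<^sub>v z) $ k = int (level n Q) * walk_mat n B $$ (j,k)" if "k < n" for k
    using transpose_mult_scaled_col[OF _ _ _ WQ z j that] Q
    unfolding regular_rat_orth_def walk_mat_def by auto
  then have "\<forall>k<n. int p dvd ((walk_mat n A)\<^sup>T *\<^sub>v z) $ k"
    using assms(4) by (simp add: dvd_mult2)
  then show ?thesis using z(1) z_not_dvd by blast
qed

end
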